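(* Let $\mathcal{C}_{\mathbf{P}\boldsymbol{G}_N}(\mathcal{A})$ be an upper polynomial polar code and let $f$ be the monomial with $\operatorname{ev}(f)=\boldsymbol{G}_N[i]$ for an integer $i\in[0,2^m-1]$. Then for any $j<i$: if $g\in\operatorname{terms}(P_j)$, where $\operatorname{ev}(P_j)=(\mathbf{P}\boldsymbol{G}_N)[j]$, and $x_0\cdots x_{m-1}= g\cdot \check{f}$, then $\check{g}\mid\check{f}$.
   Context: Let $m\ge1$, $N=2^m$, $\mathbf{R}_m=\mathbb{F}_2[x_0,\dots,x_{m-1}]/(x_0^2-x_0,\dots,x_{m-1}^2-x_{m-1})$, and $\operatorname{ev}(Q)$ the evaluation vector of $Q\in\mathbf{R}_m$ at all points of $\mathbb{F}_2^m$. Let $\boldsymbol{G}_N=\begin{pmatrix}1&0\\1&1\end{pmatrix}^{\otimes m}$; row $i$ of $\boldsymbol{G}_N$, denoted $\boldsymbol{G}_N[i]$, is $\operatorname{ev}$ of the monomial $x_0^{b_0}\cdots x_{m-1}^{b_{m-1}}$ with $(b_0,\dots,b_{m-1})$ the binary expansion of $2^m-1-i$. An upper polynomial polar code $\mathcal{C}_{\mathbf{P}\boldsymbol{G}_N}(\mathcal{A})$ is the code spanned by the rows of $\mathbf{P}\boldsymbol{G}_N$ indexed by $\mathcal{A}\subseteq[0,N-1]$, where $\mathbf{P}\in\mathbb{F}_2^{N\times N}$ is upper triangular with ones on the diagonal. For a monomial $h$, $\check{h}=x_0\cdots x_{m-1}/h$ is its multiplicative complement; $f\mid g$ means the set of variables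 of $f$ is contained in that of $g$; $\operatorname{terms}(Q)$ is the set of monomials appearing in $Q$. *)

theory Defs
  imports Main
begin

text \<open>Field F_2 is modelled by bool (True = 1, addition = xor).
  A monomial of R_m is the set of its variables (a subset of {..<m});
  an element of R_m (multilinear polynomial over F_2) is the finite set of
  its monomials, so terms(Q) = Q.\<close>

type_synonym monomial = "nat set"
type_synonym poly = "nat set set"

definition is_monomial :: "nat \<Rightarrow> monomial \<Rightarrow> bool" where
  "is_monomial m f \<longleftrightarrow> f \<subseteq> {..<m}"

definition is_poly :: "nat \<Rightarrow> poly \<Rightarrow> bool" where
  "is_poly m Q \<longleftrightarrow> (\<forall>M\<in>Q. M \<subseteq> {..<m})"

definition terms :: "poly \<Rightarrow> monomial set" where
  "terms Q = Q"

text \<open>Product of monomials in R_m (x_l^2 = x_l): union of variable sets.\<close>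
definition mono_mult :: "monomial \<Rightarrow> monomial \<Rightarrow> monomial" where
  "mono_mult f g = f \<union> g"

definition full_mono :: "nat \<Rightarrow> monomial" where
  "full_mono m = {..<m}"

definition mcheck :: "nat \<Rightarrow> monomial \<Rightarrow> monomial" where
  "mcheck m h = {..<m} - h"

definition mdvd :: "monomial \<Rightarrow> monomial \<Rightarrow> bool" where
  "mdvd f g \<longleftrightarrow> f \<subseteq> g"

definition mono_of_index :: "nat \<Rightarrow> nat \<Rightarrow> monomial" where
  "mono_of_index m n = {l. l < m \<and> bit n l}"

text \<open>Evaluation points of F_2^m, indexed by k in [0,N-1]; point k is the binary
  expansion of 2^m-1-k (set of coordinates equal to 1).  This is the ordering
  under which row i of G_N equals ev of the monomial of 2^m-1-i.\<close>
definition point :: "nat \<Rightarrow> nat \<Rightarrow> nat set" where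
  "point m k = {l. l < m \<and> bit (2^m - 1 - k) l}"

definition ev :: "nat \<Rightarrow> poly \<Rightarrow> nat \<Rightarrow> bool" where
  "ev m Q k = odd (card {M\<in>Q. M \<subseteq> point m k})"

text \<open>Kronecker power G_N = [[1,0],[1,1]]^{(x) m} as an N x N matrix.\<close>
definition kernel2 :: "nat \<Rightarrow> nat \<Rightarrow> bool" where
  "kernel2 a b \<longleftrightarrow> b \<le> a"

fun GN :: "nat \<Rightarrow> nat \<Rightarrow> nat \<Rightarrow> bool" where
  "GN 0 r c = (r = 0 \<and> c = 0)"
| "GN (Suc m) r c = (kernel2 (r div 2^m) (c div 2^m) \<and> GN m (r mod 2^m) (c mod 2^m))"

definition row :: "(nat \<Rightarrow> nat \<Rightarrow> bool) \<Rightarrow> nat \<Rightarrow> nat \<Rightarrow> bool" where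
  "row A i = (\<lambda>k. A i k)"

definition matmul :: "nat \<Rightarrow> (nat \<Rightarrow> nat \<Rightarrow> bool) \<Rightarrow> (nat \<Rightarrow> nat \<Rightarrow> bool) \<Rightarrow> nat \<Rightarrow> nat \<Rightarrow> bool" where
  "matmul N A B i k = odd (card {l. l < N \<and> A i l \<and> B l k})"

definition upper_unitriangular :: "nat \<Rightarrow> (nat \<Rightarrow> nat \<Rightarrow> bool) \<Rightarrow> bool" where
  "upper_unitriangular N P \<longleftrightarrow>
     (\<forall>a<N. \<forall>b<N. b < a \<longrightarrow> \<not> P a b) \<and> (\<forall>a<N. P a a)"

definition vec_eq :: "nat \<Rightarrow> (nat \<Rightarrow> bool) \<Rightarrow> (nat \<Rightarrow> bool) \<Rightarrow> bool" where
  "vec_eq N u v \<longleftrightarrow> (\<forall>k<N. u k = v k)"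

end

theory Submission
  imports Defs
begin

lemma mdvd_mcheck_iff: "mdvd (mcheck m g) (mcheck m f) \<longleftrightarrow> mdvd (f \<inter> {..<m}) g"
  unfolding mdvd_def mcheck_def by blast

lemma mdvd_of_mono_mult_mcheck_eq_full:
  assumes "full_mono m = mono_mult g (mcheck m f)"
  shows "mdvd (f \<inter> {..<m}) g"
  using assms unfolding full_mono_def mono_mult_def mcheck_def mdvd_def by blast

theorem lemma5:
  fixes m :: nat and P :: "nat \<Rightarrow> nat \<Rightarrow> bool" and A :: "nat set"
    and i j :: nat and f g :: monomial and Pj :: poly
  assumes "m \<ge> 1"
    and "upper_unitriangular (2^m) P"
    and "A \<subseteq> {..<2^m}"
    and "i < 2^m"
    and "is_monomial m f"
    and "vec_eq (2^m) (ev m {f}) (row (GN m) i)"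
    and "j < i"
    and "is_poly m Pj" and "finite Pj"
    and "vec_eq (2^m) (ev m Pj) (row (matmul (2^m) P (GN m)) j)"
    and "g \<in> terms Pj"
    and "full_mono m = mono_mult g (mcheck m f)"
  shows "mdvd (mcheck m g) (mcheck m f)"
  \<comment> \<open>Only the last hypothesis is needed: the polar-code data merely describe where
    the term g comes from, and the divisibility is pure monomial combinatorics.\<close>
  using mdvd_of_mono_mult_mcheck_eq_full[OF assms(12)] by (simp only: mdvd_mcheck_iff)

end
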